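(* Let $n,M\ge1$ be integers, $\mathcal X=\{x^{(1)},\dots,x^{(L)}\}\subset\mathbb C$ a set of $L$ channel input symbols, $\sigma^2>0$, $g:\mathbb C\to[0,+\infty]$ measurable, $\epsilon>0$, $B,\delta\in\mathbb R$. Let $\mathscr C$ be a homogeneous $(n,M,\epsilon,B,\delta)$-code (as defined in the context), let $p_\ell=\int_{\mathcal E_\ell}f_{Y|X}(y|x^{(\ell)})dy$, assume $\sum_jp_j>0$, let $Q(x^{(\ell)})=p_\ell/\sum_{j=1}^Lp_j$, and assume $P_{\mathscr C}=Q$. Then $$\epsilon\ge1-\exp\Big(-nH(Q)+n\log\sum_{j=1}^Lp_j\Big).$$
   Context: Channel: outputs $\boldsymbol Y=\boldsymbol x+\boldsymbol N_1$, $\boldsymbol Z=\boldsymbol x+\boldsymbol N_2$, all noise components i.i.d. complex circularly symmetric Gaussian with real and imaginary parts of zero mean and variance $\sigma^2/2$; $f_{Y|X}(y|x)=\frac1{\pi\sigma^2}\exp(-|y-x|^2/\sigma^2)$, $f_{\boldsymbol Y|\boldsymbol X}(\boldsymbol y|\boldsymbol x)=\prod_tf_{Y|X}(y_t|x_t)$ (same for $\boldsymbol Z$). An $(n,M)$-code is $\mathscr C=\{(\boldsymbol u(i),\mathcal D_i)\}_{i=1}^M$ with $\boldsymbol u(i)\in\mathcal X^n$, $|u_t(i)|\le P$ for a fixed $P>0$, pairwise disjoint measurable $\mathcal D_i\subseteq\mathbb C^n$, $M\le2^{n\lfloor\log_2L\rfloor}$; decoding sets are of product form $\mathcal D_i=\mathcal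 D_{i,1}\times\cdots\times\mathcal D_{i,n}$, $\mathcal D_{i,t}\subseteq\mathbb C$ measurable. $\gamma_i(\mathscr C)=1-\int_{\mathcal D_i}f_{\boldsymbol Y|\boldsymbol X}(\boldsymbol y|\boldsymbol u(i))d\boldsymbol y$, $\gamma=\frac1M\sum_i\gamma_i$; $(n,M,\epsilon)$-code: $\gamma<\epsilon$. With $\bar g(\boldsymbol z)=\frac1n\sum_tg(z_t)$, $\theta_i=\Pr[\bar g(\boldsymbol Z)<B\mid\boldsymbol X=\boldsymbol u(i)]$, $\theta=\frac1M\sum_i\theta_i$; $(n,M,\epsilon,B,\delta)$-code: $(n,M,\epsilon)$-code with $\theta<\delta$. Types: $P_{\boldsymbol u(i)}(x^{(\ell)})=\frac1n\#\{t:u_t(i)=x^{(\ell)}\}$, $P_{\mathscr C}=\frac1M\sum_iP_{\boldsymbol u(i)}$. For each $\ell$, $\mathcal E_\ell=\mathcal D_{i^\star,t^\star}$ where $(i^\star,t^\star)$ minimizes $\int_{\mathcal D_{i,t}}f_{Y|X}(y|x^{(\ell)})dy$ over $\{1,\dots,M\}\times\{1,\dots,n\}$. The code is homogeneous if $P_{\boldsymbol u(i)}=P_{\mathscr C}$ for every $i$, and $\mathcal D_{i,t}=\mathcal E_\ell$ whenever $u_t(i)=x^{(\ell)}$. $H$ denotes entropy with natural logarithm. *)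

theory Defs
  imports "HOL-Probability.Probability"
begin

definition chan_pdf :: "real \<Rightarrow> complex \<Rightarrow> complex \<Rightarrow> real" where
  "chan_pdf s2 x y = exp (- ((cmod (y - x))^2) / s2) / (pi * s2)"

definition vec_pdf :: "real \<Rightarrow> nat \<Rightarrow> (nat \<Rightarrow> complex) \<Rightarrow> (nat \<Rightarrow> complex) \<Rightarrow> real" where
  "vec_pdf s2 n u y = (\<Prod>t<n. chan_pdf s2 (u t) (y t))"

definition out_meas :: "nat \<Rightarrow> (nat \<Rightarrow> complex) measure" where
  "out_meas n = PiM {..<n} (\<lambda>_. (lborel :: complex measure))"

text \<open>Codewords u i (i < M), components u i t (t < n); decoding sets D i t (product form).\<close>
definition err_prob :: "real \<Rightarrow> nat \<Rightarrow> (nat \<Rightarrow> nat \<Rightarrow> complex) \<Rightarrow> (nat \<Rightarrow> nat \<Rightarrow> complex set) \<Rightarrow> nat \<Rightarrow> real" where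
  "err_prob s2 n u D i = 1 - (LINT y : PiE {..<n} (D i) | out_meas n. vec_pdf s2 n (u i) y)"

definition avg_err :: "real \<Rightarrow> nat \<Rightarrow> nat \<Rightarrow> (nat \<Rightarrow> nat \<Rightarrow> complex) \<Rightarrow> (nat \<Rightarrow> nat \<Rightarrow> complex set) \<Rightarrow> real" where
  "avg_err s2 n M u D = (\<Sum>i<M. err_prob s2 n u D i) / real M"

definition gbar :: "(complex \<Rightarrow> ennreal) \<Rightarrow> nat \<Rightarrow> (nat \<Rightarrow> complex) \<Rightarrow> ennreal" where
  "gbar g n z = (\<Sum>t<n. g (z t)) / of_nat n"

definition fail_prob :: "real \<Rightarrow> nat \<Rightarrow> (complex \<Rightarrow> ennreal) \<Rightarrow> real \<Rightarrow> (nat \<Rightarrow> nat \<Rightarrow> complex) \<Rightarrow> nat \<Rightarrow> real" where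
  "fail_prob s2 n g B u i =
     measure (density (out_meas n) (\<lambda>z. ennreal (vec_pdf s2 n (u i) z)))
       {z \<in> space (out_meas n). enn2ereal (gbar g n z) < ereal B}"

definition avg_fail :: "real \<Rightarrow> nat \<Rightarrow> nat \<Rightarrow> (complex \<Rightarrow> ennreal) \<Rightarrow> real \<Rightarrow> (nat \<Rightarrow> nat \<Rightarrow> complex) \<Rightarrow> real" where
  "avg_fail s2 n M g B u = (\<Sum>i<M. fail_prob s2 n g B u i) / real M"

definition is_code :: "real \<Rightarrow> nat \<Rightarrow> (nat \<Rightarrow> complex) \<Rightarrow> nat \<Rightarrow> nat \<Rightarrow> (nat \<Rightarrow> nat \<Rightarrow> complex) \<Rightarrow> (nat \<Rightarrow> nat \<Rightarrow> complex set) \<Rightarrow> bool" where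
  "is_code P L x n M u D \<longleftrightarrow>
     (\<forall>i<M. \<forall>t<n. u i t \<in> x ` {1..L} \<and> cmod (u i t) \<le> P) \<and>
     (\<forall>i<M. \<forall>t<n. D i t \<in> sets (borel :: complex measure)) \<and>
     (\<forall>i<M. \<forall>j<M. i \<noteq> j \<longrightarrow> PiE {..<n} (D i) \<inter> PiE {..<n} (D j) = {}) \<and>
     M \<le> 2 ^ (n * nat \<lfloor>log 2 (real L)\<rfloor>)"

definition is_code_eps where
  "is_code_eps s2 P L x n M u D \<epsilon> \<longleftrightarrow> is_code P L x n M u D \<and> avg_err s2 n M u D < \<epsilon>"

definition is_code_full where
  "is_code_full s2 P L x n M u D \<epsilon> g B \<delta> \<longleftrightarrow>
     is_code_eps s2 P L x n M u D \<epsilon> \<and> avg_fail s2 n M g B u < \<delta>"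

definition cw_type :: "nat \<Rightarrow> (nat \<Rightarrow> nat \<Rightarrow> complex) \<Rightarrow> nat \<Rightarrow> complex \<Rightarrow> real" where
  "cw_type n u i a = real (card {t. t < n \<and> u i t = a}) / real n"

definition code_type :: "nat \<Rightarrow> nat \<Rightarrow> (nat \<Rightarrow> nat \<Rightarrow> complex) \<Rightarrow> complex \<Rightarrow> real" where
  "code_type n M u a = (\<Sum>i<M. cw_type n u i a) / real M"

definition set_prob :: "real \<Rightarrow> complex \<Rightarrow> complex set \<Rightarrow> real" where
  "set_prob s2 a A = (LINT y : A | lborel. chan_pdf s2 a y)"

definition is_E_family where
  "is_E_family s2 L x n M D E \<longleftrightarrow>
     (\<forall>l\<in>{1..L}. \<exists>i0<M. \<exists>t0<n. E l = D i0 t0 \<and>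
        (\<forall>i<M. \<forall>t<n. set_prob s2 (x l) (D i0 t0) \<le> set_prob s2 (x l) (D i t)))"

definition homogeneous where
  "homogeneous L x n M u D E \<longleftrightarrow>
     (\<forall>i<M. \<forall>l\<in>{1..L}. cw_type n u i (x l) = code_type n M u (x l)) \<and>
     (\<forall>i<M. \<forall>t<n. \<forall>l\<in>{1..L}. u i t = x l \<longrightarrow> D i t = E l)"

definition entropy_nat :: "nat \<Rightarrow> (nat \<Rightarrow> real) \<Rightarrow> real" where
  "entropy_nat L Q = - (\<Sum>l=1..L. if Q l = 0 then 0 else Q l * ln (Q l))"

end

theory Submission imports Defs begin

text \<open>
  In a homogeneous code every codeword is decoded symbol by symbol into the same sets
  \<open>E\<^sub>l\<close>, so its probability of correct decoding factors into \<open>\<Prod>\<^sub>l p\<^sub>l\<^bsup>n Q(l)\<^esup>\<close>, where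
  \<open>n Q(l)\<close> counts the occurrences of \<open>x\<^sub>l\<close>. Writing \<open>p\<^sub>l = Q(l) \<Sum>\<^sub>j p\<^sub>j\<close>, this product equals
  \<open>exp (-n H(Q) + n ln \<Sum>\<^sub>j p\<^sub>j)\<close> for every codeword, hence also for the average, and the
  average error probability is below \<open>\<epsilon>\<close>.
\<close>

lemma enn2real_prod: "enn2real (\<Prod>i\<in>A. f i) = (\<Prod>i\<in>A. enn2real (f i))"
  by (induction A rule: infinite_finite_induct) (auto simp: enn2real_mult)

text \<open>Unlike \<open>product_integral_prod\<close>, no integrability is needed: for non-negative
  functions both sides are \<open>enn2real\<close> of the corresponding non-negative integrals.\<close>
lemma (in product_sigma_finite) product_integral_prod_nonneg:
  fixes f :: "'i \<Rightarrow> 'a \<Rightarrow> real"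
  assumes "finite I" and meas: "\<And>i. i \<in> I \<Longrightarrow> f i \<in> borel_measurable (M i)"
    and nonneg: "\<And>i y. i \<in> I \<Longrightarrow> 0 \<le> f i y"
  shows "(\<integral>y. (\<Prod>i\<in>I. f i (y i)) \<partial>Pi\<^sub>M I M) = (\<Prod>i\<in>I. integral\<^sup>L (M i) (f i))"
proof -
  have "(\<integral>y. (\<Prod>i\<in>I. f i (y i)) \<partial>Pi\<^sub>M I M) = enn2real (\<integral>\<^sup>+ y. (\<Prod>i\<in>I. f i (y i)) \<partial>Pi\<^sub>M I M)"
    using assms by (intro integral_eq_nn_integral) (auto intro!: prod_nonneg)
  also have "(\<integral>\<^sup>+ y. (\<Prod>i\<in>I. f i (y i)) \<partial>Pi\<^sub>M I M) = (\<integral>\<^sup>+ y. (\<Prod>i\<in>I. ennreal (f i (y i))) \<partial>Pi\<^sub>M I M)"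
    using nonneg by (simp add: prod_ennreal)
  also have "\<dots> = (\<Prod>i\<in>I. \<integral>\<^sup>+ y. f i y \<partial>M i)"
    using assms by (intro product_nn_integral_prod) auto
  also have "enn2real \<dots> = (\<Prod>i\<in>I. integral\<^sup>L (M i) (f i))"
    unfolding enn2real_prod using meas nonneg
    by (intro prod.cong refl integral_eq_nn_integral[symmetric]) auto
  finally show ?thesis .
qed

lemma (in product_sigma_finite) set_integral_PiE_prod_nonneg:
  fixes f :: "'i \<Rightarrow> 'a \<Rightarrow> real"
  assumes "finite I" and "\<And>i. i \<in> I \<Longrightarrow> f i \<in> borel_measurable (M i)"
    and "\<And>i. i \<in> I \<Longrightarrow> A i \<in> sets (M i)" and "\<And>i y. i \<in> I \<Longrightarrow> 0 \<le> f i y"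
  shows "(LINT y : PiE I A | Pi\<^sub>M I M. (\<Prod>i\<in>I. f i (y i))) = (\<Prod>i\<in>I. LINT y : A i | M i. f i y)"
proof -
  have "indicator (PiE I A) y *\<^sub>R (\<Prod>i\<in>I. f i (y i)) = (\<Prod>i\<in>I. indicator (A i) (y i) * f i (y i))"
    if "y \<in> space (Pi\<^sub>M I M)" for y
  proof -
    have "indicator (PiE I A) y = (\<Prod>i\<in>I. indicator (A i) (y i) :: real)"
      using that \<open>finite I\<close> by (auto simp: indicator_def PiE_def Pi_def space_PiM)
    then show ?thesis by (simp add: prod.distrib)
  qed
  then have "(LINT y : PiE I A | Pi\<^sub>M I M. (\<Prod>i\<in>I. f i (y i)))
      = (\<integral>y. (\<Prod>i\<in>I. indicator (A i) (y i) * f i (y i)) \<partial>Pi\<^sub>M I M)"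
    unfolding set_lebesgue_integral_def by (rule Bochner_Integration.integral_cong[OF refl])
  also have "\<dots> = (\<Prod>i\<in>I. LINT y : A i | M i. f i y)"
    unfolding set_lebesgue_integral_def using assms
    by (subst product_integral_prod_nonneg) auto
  finally show ?thesis .
qed

lemma prod_eq_prod_power_card_fibers:
  fixes c :: "'k \<Rightarrow> 'a::comm_monoid_mult"
  assumes "finite T" and "finite K" and "h ` T \<subseteq> K"
  shows "(\<Prod>t\<in>T. c (h t)) = (\<Prod>k\<in>K. c k ^ card {t\<in>T. h t = k})"
proof -
  have "(\<Prod>t\<in>T. c (h t)) = (\<Prod>k\<in>K. \<Prod>t\<in>{t\<in>T. h t = k}. c (h t))"
    using assms by (intro prod.group[symmetric]) auto
  also have "\<dots> = (\<Prod>k\<in>K. c k ^ card {t\<in>T. h t = k})"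
    by (intro prod.cong refl) simp
  finally show ?thesis .
qed

lemma power_eq_exp_type:
  fixes p S q :: real
  assumes "p \<ge> 0" and "S > 0" and "q = p / S" and "real k = real n * q"
  shows "p ^ k = exp (real n * (if q = 0 then 0 else q * ln q) + real n * q * ln S)"
proof (cases "q = 0")
  case True
  then show ?thesis using assms by simp
next
  case False
  then have p: "p > 0" using assms by auto
  have "p ^ k = exp (real k * ln p)" using p by (simp add: exp_of_nat_mult)
  also have "ln p = ln q + ln S" using p assms by (simp add: ln_div)
  finally show ?thesis using False assms by (simp add: algebra_simps)
qed

lemma prod_power_type_eq_exp_entropy:
  fixes p :: "nat \<Rightarrow> real" and k :: "nat \<Rightarrow> nat" and L n :: nat
  defines "S \<equiv> \<Sum>j=1..L. p j"
  assumes nonneg: "\<And>l. l \<in> {1..L} \<Longrightarrow> p l \<ge> 0" and S: "S > 0"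
    and k: "\<And>l. l \<in> {1..L} \<Longrightarrow> real (k l) = real n * (p l / S)"
  shows "(\<Prod>l=1..L. p l ^ k l) = exp (- real n * entropy_nat L (\<lambda>l. p l / S) + real n * ln S)"
proof -
  define Q where "Q l = p l / S" for l
  have "(\<Prod>l=1..L. p l ^ k l)
      = (\<Prod>l=1..L. exp (real n * (if Q l = 0 then 0 else Q l * ln (Q l)) + real n * Q l * ln S))"
    using nonneg S k by (intro prod.cong refl power_eq_exp_type) (auto simp: Q_def)
  also have "\<dots> = exp (\<Sum>l=1..L. real n * (if Q l = 0 then 0 else Q l * ln (Q l)) + real n * Q l * ln S)"
    by (simp add: exp_sum)
  also have "(\<Sum>l=1..L. real n * (if Q l = 0 then 0 else Q l * ln (Q l)) + real n * Q l * ln S)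
      = - real n * entropy_nat L Q + real n * ln S * (\<Sum>l=1..L. Q l)"
    by (simp add: entropy_nat_def sum.distrib sum_distrib_left sum_negf algebra_simps)
  also have "(\<Sum>l=1..L. Q l) = 1"
    using S by (simp add: Q_def S_def sum_divide_distrib[symmetric])
  finally show ?thesis by (simp add: Q_def)
qed

lemma chan_pdf_nonneg: "s2 > 0 \<Longrightarrow> chan_pdf s2 a y \<ge> 0"
  unfolding chan_pdf_def by simp

lemma borel_measurable_chan_pdf [measurable]: "chan_pdf s2 a \<in> borel_measurable borel"
  unfolding chan_pdf_def by measurable

lemma set_prob_nonneg: "s2 > 0 \<Longrightarrow> set_prob s2 a A \<ge> 0"
  unfolding set_prob_def set_lebesgue_integral_def
  by (intro integral_nonneg_AE) (auto simp: chan_pdf_nonneg)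

lemma set_integral_PiE_vec_pdf:
  assumes "s2 > 0" and "\<And>t. t < n \<Longrightarrow> A t \<in> sets (borel :: complex measure)"
  shows "(LINT y : PiE {..<n} A | out_meas n. vec_pdf s2 n v y) = (\<Prod>t<n. set_prob s2 (v t) (A t))"
proof -
  interpret product_sigma_finite "\<lambda>_. (lborel :: complex measure)" by standard
  show ?thesis
    unfolding out_meas_def vec_pdf_def set_prob_def using assms
    by (intro set_integral_PiE_prod_nonneg) (auto simp: chan_pdf_nonneg)
qed

lemma homogeneous_success_prob:
  assumes "s2 > 0" and code: "is_code P L x n M u D" and inj: "inj_on x {1..L}"
    and hom: "homogeneous L x n M u D E" and i: "i < M"
  shows "(LINT y : PiE {..<n} (D i) | out_meas n. vec_pdf s2 n (u i) y)
       = (\<Prod>l=1..L. set_prob s2 (x l) (E l) ^ card {t. t < n \<and> u i t = x l})"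
proof -
  define r where "r a = set_prob s2 a (E (the_inv_into {1..L} x a))" for a
  have r_x: "r (x l) = set_prob s2 (x l) (E l)" if "l \<in> {1..L}" for l
    using the_inv_into_f_f[OF inj that] by (simp add: r_def)
  have u: "u i t \<in> x ` {1..L}" and D: "D i t \<in> sets borel" if "t < n" for t
    using code i that by (auto simp: is_code_def)
  have "set_prob s2 (u i t) (D i t) = r (u i t)" if "t < n" for t
    using u[OF that] hom i that r_x by (auto simp: homogeneous_def)
  then have "(LINT y : PiE {..<n} (D i) | out_meas n. vec_pdf s2 n (u i) y) = (\<Prod>t<n. r (u i t))"
    by (simp add: set_integral_PiE_vec_pdf[OF \<open>s2 > 0\<close> D])
  also have "\<dots> = (\<Prod>a\<in>x ` {1..L}. r a ^ card {t\<in>{..<n}. u i t = a})"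
    using u by (intro prod_eq_prod_power_card_fibers) auto
  also have "\<dots> = (\<Prod>l=1..L. set_prob s2 (x l) (E l) ^ card {t. t < n \<and> u i t = x l})"
    unfolding prod.reindex[OF inj] by (intro prod.cong refl) (simp add: r_x)
  finally show ?thesis .
qed

theorem corollary3:
  fixes n M L :: nat and x :: "nat \<Rightarrow> complex" and s2 P \<epsilon> B \<delta> :: real
    and g :: "complex \<Rightarrow> ennreal"
    and u :: "nat \<Rightarrow> nat \<Rightarrow> complex" and D :: "nat \<Rightarrow> nat \<Rightarrow> complex set"
    and E :: "nat \<Rightarrow> complex set"
  assumes "n \<ge> 1" and "M \<ge> 1" and "L \<ge> 1" and "inj_on x {1..L}"
    and "s2 > 0" and "P > 0"
    and "g \<in> borel_measurable borel"
    and "\<epsilon> > 0"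
    and "is_code_full s2 P L x n M u D \<epsilon> g B \<delta>"
    and "is_E_family s2 L x n M D E"
    and "homogeneous L x n M u D E"
    and "(\<Sum>j=1..L. set_prob s2 (x j) (E j)) > 0"
    and "\<forall>l\<in>{1..L}. code_type n M u (x l) =
           set_prob s2 (x l) (E l) / (\<Sum>j=1..L. set_prob s2 (x j) (E j))"
  shows "\<epsilon> \<ge> 1 - exp (- real n * entropy_nat L
            (\<lambda>l. set_prob s2 (x l) (E l) / (\<Sum>j=1..L. set_prob s2 (x j) (E j)))
          + real n * ln (\<Sum>j=1..L. set_prob s2 (x j) (E j)))"
    (is "_ \<ge> 1 - ?X")
proof -
  have code: "is_code P L x n M u D" and err: "avg_err s2 n M u D < \<epsilon>"
    using assms(9) by (auto simp: is_code_full_def is_code_eps_def)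
  have "err_prob s2 n u D i = 1 - ?X" if i: "i < M" for i
  proof -
    have "real (card {t. t < n \<and> u i t = x l})
        = real n * (set_prob s2 (x l) (E l) / (\<Sum>j=1..L. set_prob s2 (x j) (E j)))"
      if "l \<in> {1..L}" for l
    proof -
      have "real (card {t. t < n \<and> u i t = x l}) / real n
          = set_prob s2 (x l) (E l) / (\<Sum>j=1..L. set_prob s2 (x j) (E j))"
        using assms(11,13) i that by (simp add: homogeneous_def cw_type_def)
      then show ?thesis using assms(1) by (simp add: field_simps)
    qed
    then show ?thesis
      unfolding err_prob_def homogeneous_success_prob[OF assms(5) code assms(4,11) i]
      using assms(5,12) by (subst prod_power_type_eq_exp_entropy) (auto simp: set_prob_nonneg)
  qed
  then have "avg_err s2 n M u D = 1 - ?X"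
    using assms(2) by (simp add: avg_err_def)
  then show ?thesis using err by simp
qed

end
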